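(* Let $R\subseteq\mathbb{R}^d$ and let $y$ lie in the relative interior of $\operatorname{conv}R$. Then for every $x\in R$ there exists an affinely independent set $S\subseteq R$ with at most $d+1$ points such that $x\in S$ and $y$ lies in the relative interior of $\operatorname{conv} S$.
   Context: $\operatorname{conv}$ denotes convex hull; relative interior is the interior relative to the affine hull. *)

theory Defs
  imports "HOL-Analysis.Analysis"
begin

end

theory Submission
  imports Defs
begin

(* Call y a strict convex combination of a finite set P if y is a convex combination
   of the points of P with all coefficients strictly positive.
   (1) Since y lies in the relative interior of conv R, the ray from x through y can be
       prolonged slightly beyond y inside conv R to a point z.  Then y lies strictly
       between x and z, so y is a strict convex combination of a finite P \<subseteq> R with x \<in> P.
   (2) If P is affinely dependent, moving the coefficients along an affine dependence
       (oriented so that the coefficient of x does not increase) until the first one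
       vanishes yields a smaller such set, still containing x.  By induction on card P
       one reaches an affinely independent S \<subseteq> R with x \<in> S.
   (3) For affinely independent S the strict convex combinations are exactly
       rel_interior (conv S), and card S \<le> aff_dim S + 1 \<le> d + 1. *)

definition strict_convex_combination :: "'a::real_vector set \<Rightarrow> 'a \<Rightarrow> bool" where
  "strict_convex_combination P y \<longleftrightarrow> finite P \<and>
     (\<exists>u. (\<forall>p\<in>P. 0 < u p) \<and> sum u P = 1 \<and> (\<Sum>p\<in>P. u p *\<^sub>R p) = y)"

lemma strict_convex_combination_positive_support:
  fixes P :: "'a::real_vector set"
  assumes "finite P" and nonneg: "\<And>p. p \<in> P \<Longrightarrow> 0 \<le> u p"
    and "sum u P = 1" and "(\<Sum>p\<in>P. u p *\<^sub>R p) = y"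
  shows "strict_convex_combination {p\<in>P. 0 < u p} y"
proof -
  let ?P' = "{p\<in>P. 0 < u p}"
  have sub: "?P' \<subseteq> P" by auto
  have zero: "\<forall>p\<in>P - ?P'. u p = 0" using nonneg by force
  have "sum u ?P' = 1"
    using sum.mono_neutral_left[OF \<open>finite P\<close> sub zero] \<open>sum u P = 1\<close> by simp
  moreover have "(\<Sum>p\<in>?P'. u p *\<^sub>R p) = y"
    using sum.mono_neutral_left[OF \<open>finite P\<close> sub, of "\<lambda>p. u p *\<^sub>R p"] zero assms(4)
    by (metis (no_types, lifting) scale_eq_0_iff)
  moreover have "finite ?P'" "\<forall>p\<in>?P'. 0 < u p" using \<open>finite P\<close> by auto
  ultimately show ?thesis unfolding strict_convex_combination_def by blast
qed

lemma convex_hull_strict_convex_combination: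
  fixes R :: "'a::real_vector set"
  assumes "z \<in> convex hull R"
  shows "\<exists>T. T \<subseteq> R \<and> strict_convex_combination T z"
proof -
  obtain T u where "finite T" "T \<subseteq> R" "\<forall>p\<in>T. 0 \<le> u p" "sum u T = 1" "(\<Sum>p\<in>T. u p *\<^sub>R p) = z"
    using assms unfolding convex_hull_explicit by blast
  then have "strict_convex_combination {p\<in>T. 0 < u p} z"
    using strict_convex_combination_positive_support[of T u z] by simp
  moreover have "{p\<in>T. 0 < u p} \<subseteq> R" using \<open>T \<subseteq> R\<close> by auto
  ultimately show ?thesis by blast
qed

lemma strict_convex_combination_singleton: "strict_convex_combination {x} x"
  by (auto simp: strict_convex_combination_def intro!: exI[of _ "\<lambda>_. 1"])

lemma strict_convex_combination_mix:
  fixes P Q :: "'a::real_vector set"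
  assumes P: "strict_convex_combination P a" and Q: "strict_convex_combination Q b"
    and "0 < \<mu>" "\<mu> < 1"
  shows "strict_convex_combination (P \<union> Q) ((1 - \<mu>) *\<^sub>R a + \<mu> *\<^sub>R b)"
proof -
  obtain u where "finite P" and u: "\<forall>p\<in>P. 0 < u p" "sum u P = 1" "(\<Sum>p\<in>P. u p *\<^sub>R p) = a"
    using P unfolding strict_convex_combination_def by blast
  obtain v where "finite Q" and v: "\<forall>p\<in>Q. 0 < v p" "sum v Q = 1" "(\<Sum>p\<in>Q. v p *\<^sub>R p) = b"
    using Q unfolding strict_convex_combination_def by blast
  define u' where "u' p = (if p \<in> P then u p else 0)" for p
  define v' where "v' p = (if p \<in> Q then v p else 0)" for p
  define w where "w p = (1 - \<mu>) * u' p + \<mu> * v' p" for p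
  have fin: "finite (P \<union> Q)" using \<open>finite P\<close> \<open>finite Q\<close> by simp
  have ext_u: "(\<Sum>p\<in>P \<union> Q. f (u' p) p) = (\<Sum>p\<in>P. f (u p) p)" if "\<And>p. f 0 p = 0"
    for f :: "real \<Rightarrow> 'a \<Rightarrow> 'b::comm_monoid_add"
    by (rule sum.mono_neutral_cong_right) (use fin that in \<open>auto simp: u'_def\<close>)
  have ext_v: "(\<Sum>p\<in>P \<union> Q. f (v' p) p) = (\<Sum>p\<in>Q. f (v p) p)" if "\<And>p. f 0 p = 0"
    for f :: "real \<Rightarrow> 'a \<Rightarrow> 'b::comm_monoid_add"
    by (rule sum.mono_neutral_cong_right) (use fin that in \<open>auto simp: v'_def\<close>)
  have "\<forall>p\<in>P \<union> Q. 0 < w p"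
    using u(1) v(1) \<open>0 < \<mu>\<close> \<open>\<mu> < 1\<close>
    by (auto simp: w_def u'_def v'_def add_pos_nonneg add_nonneg_pos)
  moreover have "sum w (P \<union> Q) = 1"
    using ext_u[of "\<lambda>r _. r"] ext_v[of "\<lambda>r _. r"] u(2) v(2)
    by (simp add: w_def sum.distrib sum_distrib_left[symmetric])
  moreover have "(\<Sum>p\<in>P \<union> Q. w p *\<^sub>R p) = (1 - \<mu>) *\<^sub>R a + \<mu> *\<^sub>R b"
    using ext_u[of "\<lambda>r p. r *\<^sub>R p"] ext_v[of "\<lambda>r p. r *\<^sub>R p"] u(3) v(3)
    by (simp add: w_def scaleR_add_left sum.distrib scaleR_sum_right[symmetric] flip: scaleR_scaleR)
  ultimately show ?thesis
    using fin unfolding strict_convex_combination_def by blast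
qed

lemma rel_interior_strict_convex_combination_through:
  fixes R :: "'a::euclidean_space set"
  assumes y: "y \<in> rel_interior (convex hull R)" and "x \<in> R"
  shows "\<exists>P. P \<subseteq> R \<and> x \<in> P \<and> strict_convex_combination P y"
proof -
  have "x \<in> affine hull (convex hull R)"
    using \<open>x \<in> R\<close> by (simp add: hull_inc)
  then obtain e where "e > 1" and z: "(1 - e) *\<^sub>R x + e *\<^sub>R y \<in> convex hull R"
    using convex_rel_interior_if2[OF convex_convex_hull y] by blast
  define z where "z = (1 - e) *\<^sub>R x + e *\<^sub>R y"
  obtain T where "T \<subseteq> R" and T: "strict_convex_combination T z"
    using convex_hull_strict_convex_combination z unfolding z_def by blast
  have "0 < 1 / e" "1 / e < 1" using \<open>e > 1\<close> by auto
  have "y = (1 - 1 / e) *\<^sub>R x + (1 / e) *\<^sub>R z"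
    using \<open>e > 1\<close> by (simp add: z_def algebra_simps)
  then have "strict_convex_combination ({x} \<union> T) y"
    using strict_convex_combination_mix[OF strict_convex_combination_singleton T
        \<open>0 < 1 / e\<close> \<open>1 / e < 1\<close>] by simp
  moreover have "{x} \<union> T \<subseteq> R" using \<open>x \<in> R\<close> \<open>T \<subseteq> R\<close> by simp
  ultimately show ?thesis by (intro exI[of _ "{x} \<union> T"]) simp
qed

lemma affine_dependence_oriented:
  fixes P :: "'a::real_vector set"
  assumes "finite P" "affine_dependent P"
  obtains m where "sum m P = 0" "(\<Sum>p\<in>P. m p *\<^sub>R p) = 0" "m x \<le> 0" "\<exists>q\<in>P. 0 < m q"
proof -
  obtain m0 where m0: "sum m0 P = 0" "\<exists>v\<in>P. m0 v \<noteq> 0" "(\<Sum>v\<in>P. m0 v *\<^sub>R v) = 0"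
    using assms affine_dependent_explicit_finite by blast
  define m where "m = (if m0 x \<le> 0 then m0 else (\<lambda>p. - m0 p))"
  have sum0: "sum m P = 0" and vec0: "(\<Sum>p\<in>P. m p *\<^sub>R p) = 0"
    using m0 by (auto simp: m_def sum_negf)
  have "\<exists>q\<in>P. 0 < m q"
  proof (rule ccontr)
    assume "\<not> ?thesis"
    then have "\<forall>p\<in>P. 0 \<le> - m p" by auto
    moreover have "sum (\<lambda>p. - m p) P = 0" using sum0 by (simp add: sum_negf)
    ultimately have "\<forall>p\<in>P. m p = 0"
      using sum_nonneg_eq_0_iff[OF \<open>finite P\<close>, of "\<lambda>p. - m p"] by auto
    then show False using m0(2) by (auto simp: m_def split: if_splits)
  qed
  moreover have "m x \<le> 0" by (auto simp: m_def)
  ultimately show ?thesis using that sum0 vec0 by blast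
qed

lemma strict_convex_combination_reduce:
  fixes P :: "'a::real_vector set"
  assumes P: "strict_convex_combination P y" and "x \<in> P" and "affine_dependent P"
  shows "\<exists>P'. P' \<subset> P \<and> x \<in> P' \<and> strict_convex_combination P' y"
proof -
  obtain u where "finite P" and upos: "\<forall>p\<in>P. 0 < u p" and usum: "sum u P = 1"
    and uvec: "(\<Sum>p\<in>P. u p *\<^sub>R p) = y"
    using P unfolding strict_convex_combination_def by blast
  obtain m where msum: "sum m P = 0" and mvec: "(\<Sum>p\<in>P. m p *\<^sub>R p) = 0"
    and "m x \<le> 0" and "\<exists>q\<in>P. 0 < m q"
    using affine_dependence_oriented[OF \<open>finite P\<close> \<open>affine_dependent P\<close>] by blast
  \<comment> \<open>ratio test: the largest step t along -m keeping all coefficients nonnegative\<close>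
  define Q where "Q = {p\<in>P. 0 < m p}"
  have "finite Q" "Q \<noteq> {}" using \<open>finite P\<close> \<open>\<exists>q\<in>P. 0 < m q\<close> by (auto simp: Q_def)
  define t where "t = Min ((\<lambda>p. u p / m p) ` Q)"
  have "t \<in> (\<lambda>p. u p / m p) ` Q"
    using Min_in[of "(\<lambda>p. u p / m p) ` Q"] \<open>finite Q\<close> \<open>Q \<noteq> {}\<close> unfolding t_def by blast
  then obtain q where "q \<in> Q" and tq: "t = u q / m q" by blast
  have t_le: "t \<le> u p / m p" if "p \<in> Q" for p
    unfolding t_def using \<open>finite Q\<close> that by auto
  have "0 < t" using \<open>q \<in> Q\<close> upos tq by (auto simp: Q_def)
  define v where "v p = u p - t * m p" for p
  have v_nonneg: "0 \<le> v p" if "p \<in> P" for p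
  proof (cases "0 < m p")
    case True
    then have "t * m p \<le> u p"
      using t_le[of p] that by (auto simp: Q_def pos_le_divide_eq)
    then show ?thesis by (simp add: v_def)
  next
    case False
    then have "t * m p \<le> 0" using \<open>0 < t\<close> by (simp add: mult_nonneg_nonpos)
    moreover have "0 < u p" using upos that by blast
    ultimately show ?thesis by (simp add: v_def)
  qed
  have "v q = 0" using \<open>q \<in> Q\<close> tq by (auto simp: v_def Q_def)
  have "0 < v x"
  proof -
    have "t * m x \<le> 0" using \<open>m x \<le> 0\<close> \<open>0 < t\<close> by (simp add: mult_nonneg_nonpos)
    moreover have "0 < u x" using upos \<open>x \<in> P\<close> by blast
    ultimately show ?thesis by (simp add: v_def)
  qed
  have "sum v P = 1"
    by (simp add: v_def sum_subtractf usum sum_distrib_left[symmetric] msum)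
  moreover have "(\<Sum>p\<in>P. v p *\<^sub>R p) = y"
    using uvec mvec
    by (simp add: v_def scaleR_diff_left sum_subtractf scaleR_sum_right[symmetric]
        flip: scaleR_scaleR)
  ultimately have "strict_convex_combination {p\<in>P. 0 < v p} y"
    using strict_convex_combination_positive_support[of P v y] \<open>finite P\<close> v_nonneg by blast
  moreover have "q \<in> P - {p\<in>P. 0 < v p}" using \<open>v q = 0\<close> \<open>q \<in> Q\<close> by (simp add: Q_def)
  then have "{p\<in>P. 0 < v p} \<subset> P" by blast
  ultimately show ?thesis using \<open>0 < v x\<close> \<open>x \<in> P\<close> by blast
qed

lemma strict_convex_combination_affinely_independent:
  fixes P :: "'a::real_vector set"
  assumes "strict_convex_combination P y" and "x \<in> P"
  shows "\<exists>S. S \<subseteq> P \<and> x \<in> S \<and> \<not> affine_dependent S \<and> strict_convex_combination S y"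
  using assms
proof (induction "card P" arbitrary: P rule: less_induct)
  case less
  show ?case
  proof (cases "affine_dependent P")
    case True
    then obtain P' where "P' \<subset> P" "x \<in> P'" "strict_convex_combination P' y"
      using strict_convex_combination_reduce[OF less.prems True] by blast
    moreover have "finite P"
      using less.prems(1) unfolding strict_convex_combination_def by blast
    ultimately have "card P' < card P" by (simp add: psubset_card_mono)
    then obtain S where "S \<subseteq> P'" "x \<in> S" "\<not> affine_dependent S" "strict_convex_combination S y"
      using less.hyps[OF _ \<open>strict_convex_combination P' y\<close> \<open>x \<in> P'\<close>] by blast
    moreover have "S \<subseteq> P" using \<open>S \<subseteq> P'\<close> \<open>P' \<subset> P\<close> by blast
    ultimately show ?thesis by (intro exI[of _ S]) simp
  next
    case False
    then show ?thesis using less.prems by (intro exI[of _ P]) simp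
  qed
qed

theorem lemma2:
  fixes R :: "(real ^ 'n) set" and y x :: "real ^ 'n"
  assumes "y \<in> rel_interior (convex hull R)"
    and "x \<in> R"
  shows "\<exists>S. S \<subseteq> R \<and> finite S \<and> \<not> affine_dependent S \<and> card S \<le> CARD('n) + 1
             \<and> x \<in> S \<and> y \<in> rel_interior (convex hull S)"
proof -
  obtain P where "P \<subseteq> R" "x \<in> P" and P: "strict_convex_combination P y"
    using rel_interior_strict_convex_combination_through[OF assms] by blast
  obtain S where "S \<subseteq> P" "x \<in> S" and indep: "\<not> affine_dependent S"
    and S: "strict_convex_combination S y"
    using strict_convex_combination_affinely_independent[OF P \<open>x \<in> P\<close>] by blast
  have "int (card S) = aff_dim S + 1"
    using aff_dim_affine_independent[OF indep] by simp
  also have "\<dots> \<le> int CARD('n) + 1"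
    using aff_dim_le_DIM[of S] by simp
  finally have "card S \<le> CARD('n) + 1" by simp
  moreover have "y \<in> rel_interior (convex hull S)"
    using S unfolding rel_interior_convex_hull_explicit[OF indep] strict_convex_combination_def
    by blast
  moreover have "finite S"
    using S unfolding strict_convex_combination_def by blast
  moreover have "S \<subseteq> R" using \<open>S \<subseteq> P\<close> \<open>P \<subseteq> R\<close> by blast
  ultimately show ?thesis using \<open>x \<in> S\<close> indep by (intro exI[of _ S]) simp
qed

end
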